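(* Let $P, Q \subseteq \mathbb{R}^d$ be polytopes such that $L_P(s) = L_Q(s)$ for all real $s \ge 0$. Then $L_{\operatorname{ppyr} P}(s) = L_{\operatorname{ppyr} Q}(s)$ for all real $s \ge 0$.
   Context: For a polytope $P \subseteq \mathbb{R}^d$ and real $s \ge 0$, $L_P(s) = \#(sP \cap \mathbb{Z}^d)$, where $sP = \{sx : x \in P\}$ (so $0P=\{0\}$ and $L_P(0)=1$). The pseudopyramid of $P$ is $\operatorname{ppyr}(P) = \operatorname{conv}(P \cup \{0\}) = \bigcup_{0 \le \lambda \le 1} \lambda P$. *)

theory Defs
  imports "HOL-Analysis.Analysis"
begin

definition lattice_points :: "(real ^ 'n) set" where
  "lattice_points = {x. \<forall>i. x $ i \<in> \<int>}"

definition dilate :: "real \<Rightarrow> (real ^ 'n) set \<Rightarrow> (real ^ 'n) set" where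
  "dilate s P = (if s = 0 then {0} else (\<lambda>x. s *\<^sub>R x) ` P)"

definition lattice_count :: "(real ^ 'n) set \<Rightarrow> real \<Rightarrow> nat" where
  "lattice_count P s = card (dilate s P \<inter> lattice_points)"

definition ppyr :: "(real ^ 'n) set \<Rightarrow> (real ^ 'n) set" where
  "ppyr P = convex hull (P \<union> {0})"

end

theory Submission
  imports Defs
begin

text \<open>
  For a compact convex \<open>P\<close> and a lattice point \<open>x \<noteq> 0\<close>, the times \<open>t \<in> (0, s]\<close> with
  \<open>x \<in> tP\<close> form a closed interval, and \<open>x \<in> s ppyr(P)\<close> iff this interval is nonempty.
  Hence \<open>L_ppyr(P)(s) - 1\<close> counts these intervals, i.e.\ their left endpoints. If \<open>\<delta>\<close> is
  smaller than all gaps between endpoints, the number of intervals starting at \<open>e\<close> is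
  \<open>L_P(e) - L_P(e - \<delta>)\<close>. Summing over the endpoints of both \<open>P\<close> and \<open>Q\<close> writes
  \<open>L_ppyr(P)(s)\<close> and \<open>L_ppyr(Q)(s)\<close> as the same expression in values of \<open>L_P = L_Q\<close>.
\<close>

lemma card_eq_sum_left_endpoint_jumps:
  fixes a b :: "'a \<Rightarrow> real"
  assumes "finite S" "finite E"
    and ab: "\<And>x. x \<in> S \<Longrightarrow> a x \<le> b x \<and> a x \<in> E \<and> b x \<in> E"
    and gap: "\<And>e e'. e \<in> E \<Longrightarrow> e' \<in> E \<Longrightarrow> e' < e \<Longrightarrow> e' < e - \<delta>"
    and "\<delta> > 0"
  shows "int (card S) =
    (\<Sum>e\<in>E. int (card {x\<in>S. e \<in> {a x..b x}}) - int (card {x\<in>S. e - \<delta> \<in> {a x..b x}}))"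
proof -
  have jump: "int (card {x\<in>S. e \<in> {a x..b x}}) - int (card {x\<in>S. e - \<delta> \<in> {a x..b x}})
      = int (card {x\<in>S. a x = e})" if "e \<in> E" for e
  proof -
    define now where "now = {x\<in>S. e \<in> {a x..b x}}"
    define before where "before = {x\<in>S. e - \<delta> \<in> {a x..b x}}"
    have "before \<subseteq> now"
      unfolding before_def now_def using ab gap[OF that] \<open>\<delta> > 0\<close> by fastforce
    moreover have "now - before = {x\<in>S. a x = e}"
      unfolding before_def now_def using ab gap[OF that] \<open>\<delta> > 0\<close> by force
    moreover have "finite now"
      unfolding now_def using \<open>finite S\<close> by simp
    ultimately show ?thesis
      unfolding now_def[symmetric] before_def[symmetric]
      by (metis card_Diff_subset card_mono finite_subset of_nat_diff)
  qed
  have "(\<Sum>e\<in>E. int (card {x\<in>S. e \<in> {a x..b x}}) - int (card {x\<in>S. e - \<delta> \<in> {a x..b x}}))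
      = (\<Sum>e\<in>E. \<Sum>x\<in>{x\<in>S. a x = e}. 1)"
    using jump by simp
  also have "\<dots> = (\<Sum>x\<in>S. 1)"
    using assms(1,2) ab by (intro sum.group) auto
  finally show ?thesis by simp
qed

lemma obtain_uniform_gap:
  fixes E :: "real set"
  assumes "finite E" "E \<subseteq> {0<..}"
  obtains \<delta> where "0 < \<delta>" "E \<subseteq> {\<delta><..}"
    and "\<And>e e'. e \<in> E \<Longrightarrow> e' \<in> E \<Longrightarrow> e' < e \<Longrightarrow> e' < e - \<delta>"
proof -
  define D where "D = insert 1 (E \<union> (\<lambda>(e, e'). e - e') ` {(e, e') \<in> E \<times> E. e' < e})"
  have "finite D"
    unfolding D_def using assms(1) by (auto intro: finite_subset[of _ "E \<times> E"])
  moreover have "\<forall>d\<in>D. d > 0"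
    unfolding D_def using assms(2) by auto
  ultimately have "Min D > 0"
    by (simp add: D_def)
  have "Min D \<le> e - e'" if "e \<in> E" "e' \<in> E" "e' < e" for e e'
    using \<open>finite D\<close> that by (intro Min_le) (auto simp: D_def image_iff)
  moreover have "Min D \<le> e" if "e \<in> E" for e
    using \<open>finite D\<close> that by (simp add: D_def)
  ultimately show ?thesis
    using \<open>Min D > 0\<close> by (intro that[of "Min D / 2"]) fastforce+
qed

lemma mem_dilate_iff:
  assumes "t > 0"
  shows "x \<in> dilate t P \<longleftrightarrow> inverse t *\<^sub>R x \<in> P"
proof
  assume "x \<in> dilate t P"
  then show "inverse t *\<^sub>R x \<in> P"
    using assms by (auto simp: dilate_def)
next
  assume "inverse t *\<^sub>R x \<in> P"
  moreover have "x = t *\<^sub>R (inverse t *\<^sub>R x)"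
    using assms by simp
  ultimately show "x \<in> dilate t P"
    using assms unfolding dilate_def by (metis image_eqI less_irrefl)
qed

lemma norm_le_of_mem_dilate:
  assumes "0 < t" "\<And>p. p \<in> P \<Longrightarrow> norm p \<le> R" "x \<in> dilate t P"
  shows "norm x \<le> R * t"
proof -
  have "inverse t *\<^sub>R x \<in> P"
    using assms(1,3) by (simp only: mem_dilate_iff)
  then have "norm (inverse t *\<^sub>R x) \<le> R"
    using assms(2) by blast
  then have "norm x / t \<le> R"
    using assms(1) by (simp add: divide_inverse mult.commute)
  then show ?thesis
    using assms(1) by (simp add: divide_le_eq)
qed

lemma zero_in_lattice_points: "0 \<in> lattice_points"
  unfolding lattice_points_def by simp

lemma finite_lattice_points_cball: "finite (lattice_points \<inter> cball (0::real^'n) r)"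
proof -
  define F where "F = {k::real. k \<in> \<int> \<and> \<bar>k\<bar> \<le> r}"
  have "finite F"
    unfolding F_def by (rule finite_abs_int_segment)
  have "lattice_points \<inter> cball (0::real^'n) r \<subseteq> (\<lambda>f. \<chi> i. f i) ` (UNIV \<rightarrow>\<^sub>E F)"
  proof
    fix x :: "real^'n"
    assume x: "x \<in> lattice_points \<inter> cball 0 r"
    have "x $ i \<in> F" for i
      using x component_le_norm_cart[of x i] unfolding F_def lattice_points_def by auto
    then show "x \<in> (\<lambda>f. \<chi> i. f i) ` (UNIV \<rightarrow>\<^sub>E F)"
      by (intro image_eqI[of _ _ "\<lambda>i. x $ i"]) auto
  qed
  moreover have "finite ((\<lambda>f. \<chi> i. f i) ` (UNIV \<rightarrow>\<^sub>E F) :: (real^'n) set)"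
    using \<open>finite F\<close> by (intro finite_imageI finite_PiE) auto
  ultimately show ?thesis
    by (rule finite_subset)
qed

lemma mem_dilate_ppyr_iff:
  assumes "convex P" "s > 0"
  shows "x \<in> dilate s (ppyr P) \<longleftrightarrow> x = 0 \<or> (\<exists>t. 0 < t \<and> t \<le> s \<and> x \<in> dilate t P)"
proof (cases "P = {}")
  case True
  then show ?thesis
    using assms by (auto simp: ppyr_def dilate_def)
next
  case False
  have ppyr: "ppyr P = {x. \<exists>u\<ge>0. \<exists>v\<ge>0. \<exists>b. u + v = 1 \<and> b \<in> P \<and> x = v *\<^sub>R b}"
    unfolding ppyr_def using convex_hull_insert[OF False, of 0] convex_hull_eq[of P] assms(1) by simp
  show ?thesis
  proof
    assume "x \<in> dilate s (ppyr P)"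
    then obtain v b where "0 \<le> v" "v \<le> 1" "b \<in> P" "x = (s * v) *\<^sub>R b"
      using assms(2) by (auto simp: dilate_def ppyr)
    then show "x = 0 \<or> (\<exists>t. 0 < t \<and> t \<le> s \<and> x \<in> dilate t P)"
      using assms(2)
      by (cases "v = 0") (auto simp: dilate_def mult_le_cancel_left1 intro!: exI[of _ "s * v"])
  next
    assume "x = 0 \<or> (\<exists>t. 0 < t \<and> t \<le> s \<and> x \<in> dilate t P)"
    then obtain v b where "0 \<le> v" "v \<le> 1" "b \<in> P" "x = s *\<^sub>R (v *\<^sub>R b)"
    proof
      assume "x = 0"
      with False that[of 0] show thesis by auto
    next
      assume "\<exists>t. 0 < t \<and> t \<le> s \<and> x \<in> dilate t P"
      then obtain t b where "0 < t" "t \<le> s" "b \<in> P" "x = t *\<^sub>R b"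
        by (auto simp: dilate_def)
      with assms(2) that[of "t / s" b] show thesis by simp
    qed
    moreover from this have "v *\<^sub>R b \<in> ppyr P"
      unfolding ppyr by (intro CollectI exI[of _ "1 - v"] exI[of _ v]) auto
    ultimately show "x \<in> dilate s (ppyr P)"
      using assms(2) by (auto simp: dilate_def intro!: image_eqI[of _ _ "v *\<^sub>R b"])
  qed
qed

definition appearance_times :: "(real^'n) set \<Rightarrow> real \<Rightarrow> real^'n \<Rightarrow> real set" where
  "appearance_times P s x = {t. 0 < t \<and> t \<le> s \<and> x \<in> dilate t P}"

definition appearing_points :: "(real^'n) set \<Rightarrow> real \<Rightarrow> (real^'n) set" where
  "appearing_points P s = {x \<in> lattice_points - {0}. appearance_times P s x \<noteq> {}}"

definition appearance_endpoints :: "(real^'n) set \<Rightarrow> real \<Rightarrow> real set" where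
  "appearance_endpoints P s =
    (\<lambda>x. Inf (appearance_times P s x)) ` appearing_points P s \<union>
    (\<lambda>x. Sup (appearance_times P s x)) ` appearing_points P s"

lemma is_interval_appearance_times:
  assumes "convex P"
  shows "is_interval (appearance_times P s x)"
  unfolding is_interval_1
proof (intro ballI allI impI)
  define U where "U = (\<lambda>u. u *\<^sub>R x) -` P"
  have "is_interval U"
    unfolding U_def is_interval_convex_1 using assms
    by (intro convex_linear_vimage bounded_linear.linear[OF bounded_linear_scaleR_left])
  have T_U: "appearance_times P s x = {t. 0 < t \<and> t \<le> s \<and> inverse t \<in> U}"
    by (auto simp: U_def appearance_times_def mem_dilate_iff)
  fix t\<^sub>1 t\<^sub>2 t
  assume "t\<^sub>1 \<in> appearance_times P s x" "t\<^sub>2 \<in> appearance_times P s x" "t\<^sub>1 \<le> t \<and> t \<le> t\<^sub>2"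
  then have t: "0 < t\<^sub>1" "t\<^sub>1 \<le> t" "t \<le> t\<^sub>2" "t\<^sub>2 \<le> s" "inverse t\<^sub>1 \<in> U" "inverse t\<^sub>2 \<in> U"
    unfolding T_U by auto
  moreover have "inverse t\<^sub>2 \<le> inverse t" "inverse t \<le> inverse t\<^sub>1"
    using t by (simp_all add: le_imp_inverse_le)
  ultimately have "inverse t \<in> U"
    using mem_is_interval_1_I[OF \<open>is_interval U\<close>] by blast
  then show "t \<in> appearance_times P s x"
    using t unfolding T_U by auto
qed

lemma compact_appearance_times:
  fixes P :: "(real^'n) set"
  assumes "compact P" "x \<noteq> 0"
  shows "compact (appearance_times P s x)"
proof -
  obtain R where "R > 0" and R: "\<And>p. p \<in> P \<Longrightarrow> norm p \<le> R"
    using compact_imp_bounded[OF assms(1)] by (auto simp: bounded_pos)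
  define m where "m = norm x / R"
  have "m > 0"
    using \<open>R > 0\<close> assms(2) by (simp add: m_def)
  have T_eq: "appearance_times P s x = {m..s} \<inter> (\<lambda>t. inverse t *\<^sub>R x) -` P"
  proof safe
    fix t assume "t \<in> appearance_times P s x"
    then have "0 < t" "t \<le> s" "x \<in> dilate t P"
      by (auto simp: appearance_times_def)
    moreover from this have "norm x \<le> R * t"
      using R by (intro norm_le_of_mem_dilate) auto
    ultimately show "t \<in> {m..s}"
      using \<open>R > 0\<close> by (simp add: m_def divide_le_eq mult.commute)
  qed (use \<open>m > 0\<close> in \<open>auto simp: appearance_times_def mem_dilate_iff\<close>)
  have "continuous_on {m..s} (\<lambda>t. inverse t *\<^sub>R x)"
    using \<open>m > 0\<close> by (intro continuous_intros) auto
  then have "closed (appearance_times P s x)"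
    unfolding T_eq
    by (rule continuous_closed_preimage[OF _ closed_atLeastAtMost compact_imp_closed[OF assms(1)]])
  then show ?thesis
    using bounded_subset[OF bounded_closed_interval, of "appearance_times P s x" m s]
    by (simp add: compact_eq_bounded_closed T_eq)
qed

lemma appearance_times_eq_Icc:
  fixes P :: "(real^'n) set"
  assumes "compact P" "convex P" "x \<noteq> 0" "appearance_times P s x \<noteq> {}"
  defines "T \<equiv> appearance_times P s x"
  shows "T = {Inf T..Sup T}" "0 < Inf T" "Sup T \<le> s"
proof -
  obtain a b where ab: "T = {a..b}"
    using compact_appearance_times[OF assms(1,3)] is_interval_appearance_times[OF assms(2)]
      connected_compact_interval_1 is_interval_connected_1 unfolding T_def by blast
  moreover have "a \<le> b"
    using assms(4) ab by (auto simp: T_def)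
  ultimately have "Inf T = a" "Sup T = b" "a \<in> T" "b \<in> T"
    by simp_all
  then show "T = {Inf T..Sup T}" "0 < Inf T" "Sup T \<le> s"
    using ab by (simp_all add: T_def appearance_times_def)
qed

lemma finite_appearing_points:
  assumes "bounded P"
  shows "finite (appearing_points P s)"
proof -
  obtain R where "R > 0" and R: "\<And>p. p \<in> P \<Longrightarrow> norm p \<le> R"
    using assms by (auto simp: bounded_pos)
  have "appearing_points P s \<subseteq> lattice_points \<inter> cball 0 (R * s)"
  proof
    fix x assume "x \<in> appearing_points P s"
    then obtain t where "x \<in> lattice_points" "0 < t" "t \<le> s" "x \<in> dilate t P"
      by (auto simp: appearing_points_def appearance_times_def)
    moreover from this have "norm x \<le> R * t"
      using R by (intro norm_le_of_mem_dilate) auto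
    ultimately show "x \<in> lattice_points \<inter> cball 0 (R * s)"
      using \<open>R > 0\<close> by (auto intro: order_trans mult_left_mono)
  qed
  then show ?thesis
    using finite_lattice_points_cball by (rule finite_subset)
qed

lemma lattice_count_eq_card_appearing:
  assumes "bounded P" "0 < t" "t \<le> s"
  shows "lattice_count P t =
    (if 0 \<in> P then 1 else 0) + card {x \<in> appearing_points P s. t \<in> appearance_times P s x}"
proof -
  define A where "A = {x \<in> appearing_points P s. t \<in> appearance_times P s x}"
  have "0 \<in> dilate t P \<longleftrightarrow> 0 \<in> P"
    using assms(2) by (simp add: mem_dilate_iff)
  then have "dilate t P \<inter> lattice_points = (if 0 \<in> P then {0} else {}) \<union> A"
    using assms(2,3) zero_in_lattice_points
    by (auto simp: A_def appearing_points_def appearance_times_def)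
  moreover have "finite A"
    unfolding A_def using finite_appearing_points[OF assms(1)] by simp
  moreover have "0 \<notin> A"
    by (simp add: A_def appearing_points_def)
  ultimately show ?thesis
    unfolding lattice_count_def A_def[symmetric] by (simp add: card_insert_if)
qed

lemma lattice_count_ppyr:
  assumes "convex P" "bounded P" "0 < s"
  shows "lattice_count (ppyr P) s = Suc (card (appearing_points P s))"
proof -
  have "dilate s (ppyr P) \<inter> lattice_points = insert 0 (appearing_points P s)"
    using mem_dilate_ppyr_iff[OF assms(1,3)] zero_in_lattice_points
    by (auto simp: appearing_points_def appearance_times_def)
  moreover have "0 \<notin> appearing_points P s"
    by (simp add: appearing_points_def)
  ultimately show ?thesis
    unfolding lattice_count_def using finite_appearing_points[OF assms(2)] by simp
qed

lemma appearance_endpoints_subset: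
  assumes "compact P" "convex P"
  shows "appearance_endpoints P s \<subseteq> {0<..s}"
proof
  fix e assume "e \<in> appearance_endpoints P s"
  then obtain x where "x \<in> appearing_points P s"
    and e: "e = Inf (appearance_times P s x) \<or> e = Sup (appearance_times P s x)"
    by (auto simp: appearance_endpoints_def)
  then have "x \<noteq> 0" "appearance_times P s x \<noteq> {}"
    by (auto simp: appearing_points_def)
  note Icc = appearance_times_eq_Icc[OF assms this]
  then have "Inf (appearance_times P s x) \<le> Sup (appearance_times P s x)"
    using \<open>appearance_times P s x \<noteq> {}\<close> by (metis atLeastatMost_empty_iff)
  with Icc(2,3) e show "e \<in> {0<..s}"
    by auto
qed

lemma finite_appearance_endpoints:
  assumes "bounded P"
  shows "finite (appearance_endpoints P s)"
  using finite_appearing_points[OF assms] by (simp add: appearance_endpoints_def)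

lemma lattice_count_ppyr_eq_sum_jumps:
  fixes P :: "(real^'n) set"
  assumes "compact P" "convex P" "0 < s" "finite E" "appearance_endpoints P s \<subseteq> E"
    and E: "E \<subseteq> {0<..s}" "E \<subseteq> {\<delta><..}" and gap: "\<And>e e'. e \<in> E \<Longrightarrow> e' \<in> E \<Longrightarrow> e' < e \<Longrightarrow> e' < e - \<delta>"
    and "0 < \<delta>"
  shows "int (lattice_count (ppyr P) s) =
    1 + (\<Sum>e\<in>E. int (lattice_count P e) - int (lattice_count P (e - \<delta>)))"
proof -
  define A where "A = appearing_points P s"
  define a where "a x = Inf (appearance_times P s x)" for x
  define b where "b x = Sup (appearance_times P s x)" for x
  have "bounded P"
    using assms(1) by (rule compact_imp_bounded)
  have Icc: "appearance_times P s x = {a x..b x}" if "x \<in> A" for x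
    using that appearance_times_eq_Icc[OF assms(1,2)]
    by (simp add: A_def a_def b_def appearing_points_def)
  have endpoints: "a x \<le> b x \<and> a x \<in> E \<and> b x \<in> E" if "x \<in> A" for x
  proof -
    have "{a x..b x} \<noteq> {}"
      using that Icc[OF that] by (simp add: A_def appearing_points_def)
    moreover have "a x \<in> appearance_endpoints P s" "b x \<in> appearance_endpoints P s"
      using that unfolding appearance_endpoints_def A_def a_def b_def by blast+
    ultimately show ?thesis
      using assms(5) by auto
  qed
  have count: "lattice_count P t = (if 0 \<in> P then 1 else 0) + card {x \<in> A. t \<in> {a x..b x}}"
    if "0 < t" "t \<le> s" for t
    using lattice_count_eq_card_appearing[OF \<open>bounded P\<close> that] Icc
    by (simp add: A_def cong: conj_cong)
  have "int (card A) = (\<Sum>e\<in>E. int (card {x\<in>A. e \<in> {a x..b x}}) - int (card {x\<in>A. e - \<delta> \<in> {a x..b x}}))"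
    using finite_appearing_points[OF \<open>bounded P\<close>] assms(4) endpoints gap \<open>0 < \<delta>\<close>
    unfolding A_def by (intro card_eq_sum_left_endpoint_jumps) auto
  also have "\<dots> = (\<Sum>e\<in>E. int (lattice_count P e) - int (lattice_count P (e - \<delta>)))"
  proof (rule sum.cong[OF refl])
    fix e assume "e \<in> E"
    with E have "\<delta> < e" "e \<le> s"
      by (auto simp: subset_eq)
    with \<open>0 < \<delta>\<close> show "int (card {x\<in>A. e \<in> {a x..b x}}) - int (card {x\<in>A. e - \<delta> \<in> {a x..b x}})
        = int (lattice_count P e) - int (lattice_count P (e - \<delta>))"
      using count[of e] count[of "e - \<delta>"] by simp
  qed
  finally show ?thesis
    using lattice_count_ppyr[OF assms(2) \<open>bounded P\<close> assms(3)] by (simp add: A_def)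
qed

theorem lemma2p1:
  fixes P Q :: "(real ^ 'n) set"
  assumes "polytope P" and "polytope Q"
    and "\<forall>s\<ge>0. lattice_count P s = lattice_count Q s"
  shows "\<forall>s\<ge>0. lattice_count (ppyr P) s = lattice_count (ppyr Q) s"
proof (intro allI impI)
  fix s :: real
  assume "s \<ge> 0"
  show "lattice_count (ppyr P) s = lattice_count (ppyr Q) s"
  proof (cases "s = 0")
    case True
    then show ?thesis
      by (simp add: lattice_count_def dilate_def)
  next
    case False
    with \<open>s \<ge> 0\<close> have "0 < s"
      by simp
    have PQ: "compact P" "convex P" "compact Q" "convex Q"
      using assms(1,2) polytope_imp_compact polytope_imp_convex by auto
    define E where "E = appearance_endpoints P s \<union> appearance_endpoints Q s"
    have "finite E" "E \<subseteq> {0<..s}"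
      using PQ by (simp_all add: E_def finite_appearance_endpoints compact_imp_bounded
          appearance_endpoints_subset)
    have "E \<subseteq> {0<..}"
      using \<open>E \<subseteq> {0<..s}\<close> by auto
    then obtain \<delta> where "0 < \<delta>" "E \<subseteq> {\<delta><..}"
      and gap: "\<And>e e'. e \<in> E \<Longrightarrow> e' \<in> E \<Longrightarrow> e' < e \<Longrightarrow> e' < e - \<delta>"
      using obtain_uniform_gap[OF \<open>finite E\<close>] by blast
    have endpoints: "appearance_endpoints P s \<subseteq> E" "appearance_endpoints Q s \<subseteq> E"
      by (auto simp: E_def)
    note jumps = lattice_count_ppyr_eq_sum_jumps[OF _ _ \<open>0 < s\<close> \<open>finite E\<close> _
        \<open>E \<subseteq> {0<..s}\<close> \<open>E \<subseteq> {\<delta><..}\<close> gap \<open>0 < \<delta>\<close>]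
    have "(\<Sum>e\<in>E. int (lattice_count P e) - int (lattice_count P (e - \<delta>))) =
        (\<Sum>e\<in>E. int (lattice_count Q e) - int (lattice_count Q (e - \<delta>)))"
      using \<open>E \<subseteq> {\<delta><..}\<close> \<open>0 < \<delta>\<close> assms(3) by (intro sum.cong) auto
    then have "int (lattice_count (ppyr P) s) = int (lattice_count (ppyr Q) s)"
      by (simp add: jumps[OF PQ(1,2) endpoints(1)] jumps[OF PQ(3,4) endpoints(2)])
    then show ?thesis
      by simp
  qed
qed

end
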